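(* Let $m\ge1$ and let $(b_0,\dots,b_d)$ be constants with $b_0\neq0$. If $\sum_{k=0}^d b_k\,M(\mathcal G(m,n+k))=0$ holds for all $n\ge1$, then it holds for all $n\in\mathbb Z$. Consequently, extending the sequence $(M(\mathcal G(m,n)))_{n\ge1}$ backwards by any linear recurrence with constant coefficients and nonzero constant coefficient that it satisfies yields exactly the values $M(\mathcal G(m,n))$, $n\le 0$.
   Context: Grid conventions: an $m$-by-$N$ grid has vertices $(i,j)$, $1\le i\le m$ (rows), $1\le j\le N$ (columns); horizontal edges join $(i,j),(i,j+1)$, vertical edges join $(i,j),(i+1,j)$. A signed graph is a graph each of whose edges carries a sign $+1$ or $-1$. For a signed graph $\mathcal G$, $M(\mathcal G)$ denotes the sum over all perfect matchings of $\mathcal G$ of the product of the signs of the edges in the matching. For $m\ge1$ and $n\ge 1$, $\mathcal G(m,n)$ is the $m$-by-$n$ grid graph with all edges of sign $+1$. For $n\le 0$, $\mathcal G(m,n)$ has the vertex set of the $m$-by-$(2-n)$ grid, all horizontal edges of that grid with sign $+1$, the vertical edges lying in columns $2,3,\dots,1-n$ with sign $-1$, and no vertical edges in columns $1$ and $2-n$. *)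

theory Defs
  imports Complex_Main
begin

text \<open>A signed graph is given by a vertex set V, an edge set E (edges are two-element
  vertex sets) and a sign function on edges.  A perfect matching is a set of edges
  covering each vertex exactly once.\<close>

definition perfect_matchings :: "'v set \<Rightarrow> 'v set set \<Rightarrow> 'v set set set" where
  "perfect_matchings V E = {P. P \<subseteq> E \<and> (\<forall>v\<in>V. \<exists>!e. e \<in> P \<and> v \<in> e)}"

definition Msigned :: "'v set \<Rightarrow> 'v set set \<Rightarrow> ('v set \<Rightarrow> int) \<Rightarrow> int" where
  "Msigned V E sg = (\<Sum>P\<in>perfect_matchings V E. \<Prod>e\<in>P. sg e)"

definition gcols :: "int \<Rightarrow> int" where
  "gcols n = (if n \<ge> 1 then n else 2 - n)"

definition gverts :: "nat \<Rightarrow> int \<Rightarrow> (int \<times> int) set" where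
  "gverts m n = {(i, j). 1 \<le> i \<and> i \<le> int m \<and> 1 \<le> j \<and> j \<le> gcols n}"

definition ghedges :: "nat \<Rightarrow> int \<Rightarrow> (int \<times> int) set set" where
  "ghedges m n = {{(i, j), (i, j + 1)} | i j.
      1 \<le> i \<and> i \<le> int m \<and> 1 \<le> j \<and> j + 1 \<le> gcols n}"

definition gvedges :: "nat \<Rightarrow> int \<Rightarrow> (int \<times> int) set set" where
  "gvedges m n = {{(i, j), (i + 1, j)} | i j.
      1 \<le> i \<and> i + 1 \<le> int m \<and>
      (if n \<ge> 1 then 1 \<le> j \<and> j \<le> n else 2 \<le> j \<and> j \<le> 1 - n)}"

definition gedges :: "nat \<Rightarrow> int \<Rightarrow> (int \<times> int) set set" where
  "gedges m n = ghedges m n \<union> gvedges m n"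

definition gsign :: "nat \<Rightarrow> int \<Rightarrow> (int \<times> int) set \<Rightarrow> int" where
  "gsign m n e = (if n \<le> 0 \<and> e \<in> gvedges m n then -1 else 1)"

definition MG :: "nat \<Rightarrow> int \<Rightarrow> int" where
  "MG m n = Msigned (gverts m n) (gedges m n) (gsign m n)"

end

theory Submission
  imports Defs
begin

text \<open>Transfer matrices. A state is a function on the sets of rows X \<subseteq> {1..m}. Appending a
  column whose vertical edges have weight s acts on states by a linear operator T s, so for
  n \<ge> 1, M(G(m,n)) is the value of T 1 ^ n \<delta> at the full row set, \<delta> being the initial state.
  Reading G(m,-k) in the same way gives T 0 (T (-1) ^ k (T 0 \<delta>)) instead. Here T 0 is
  complementation of the row set, an involution, and T 0 \<circ> T (-1) \<circ> T 0 is a left inverse of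
  T 1, because the one-column matching sums with vertical weights 1 and -1 are mutually inverse
  under subset convolution. Hence a single sequence of states u n (n \<in> \<int>), in which u n is
  obtained from u (n + 1) by this inverse, yields M(G(m,n)) for every integer n.

  The states form a space of dimension 2^m, so some 2^m + 1 consecutive u n are linearly
  dependent; pulling such a dependence back with the inverse operator shows that M(G(m,n))
  satisfies a linear recurrence with nonzero constant coefficient on every half-line n \<le> N.
  A combination of the M(G(m,n)) vanishing for n \<ge> 1 therefore satisfies this recurrence for
  n \<le> 0 and vanishes identically. The second claim is the uniqueness of the backward
  continuation of a recurrence with nonzero constant coefficient.\<close>

section \<open>Subset convolution\<close>

lemma sum_Pow_split:
  assumes "finite A"
  shows "(\<Sum>Z\<in>Pow A. f Z) =
    (\<Sum>Z\<in>Pow (A - {a}). f Z) + (if a \<in> A then \<Sum>Z\<in>Pow (A - {a}). f (insert a Z) else 0)"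
proof (cases "a \<in> A")
  case True
  have "Pow A = Pow (A - {a}) \<union> insert a ` Pow (A - {a})"
    using True Pow_insert[of a "A - {a}"] by (simp add: insert_absorb)
  moreover have "sum f (Pow (A - {a}) \<union> insert a ` Pow (A - {a})) =
      sum f (Pow (A - {a})) + sum f (insert a ` Pow (A - {a}))"
    by (rule sum.union_disjoint) (use assms in auto)
  moreover have "inj_on (insert a) (Pow (A - {a}))"
    by (rule inj_onI) blast
  ultimately show ?thesis
    using True by (simp add: sum.reindex)
qed simp

lemma sum_Pow_avoiding:
  assumes "finite A"
  shows "(\<Sum>Z\<in>Pow A. if a \<in> Z then 0 else f Z) = (\<Sum>Z\<in>Pow (A - {a}). f Z)"
proof -
  have "(\<Sum>Z\<in>Pow (A - {a}). if a \<in> Z then 0 else f Z) = (\<Sum>Z\<in>Pow (A - {a}). f Z)"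
    by (intro sum.cong) auto
  then show ?thesis
    using sum_Pow_split[OF assms, of "\<lambda>Z. if a \<in> Z then 0 else f Z" a] by simp
qed

lemma sum_Pow_Pow_swap:
  assumes "finite A"
  shows "(\<Sum>Z\<in>Pow A. \<Sum>W\<in>Pow Z. g W Z) = (\<Sum>W\<in>Pow A. \<Sum>Y\<in>Pow (A - W). g W (W \<union> Y))"
proof -
  have "(\<Sum>Z\<in>Pow A. \<Sum>W\<in>Pow Z. g W Z) = (\<Sum>Z\<in>Pow A. \<Sum>W\<in>{W \<in> Pow A. W \<subseteq> Z}. g W Z)"
    by (intro sum.cong) auto
  also have "\<dots> = (\<Sum>W\<in>Pow A. \<Sum>Z\<in>{Z \<in> Pow A. W \<subseteq> Z}. g W Z)"
    by (rule sum.swap_restrict) (use assms in auto)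
  also have "\<dots> = (\<Sum>W\<in>Pow A. \<Sum>Y\<in>Pow (A - W). g W (W \<union> Y))"
  proof (rule sum.cong[OF refl])
    fix W assume W: "W \<in> Pow A"
    have "{Z \<in> Pow A. W \<subseteq> Z} = (\<lambda>Y. W \<union> Y) ` Pow (A - W)"
    proof (intro equalityI subsetI)
      fix Z assume "Z \<in> {Z \<in> Pow A. W \<subseteq> Z}"
      then have "Z = W \<union> (Z - W)" "Z - W \<in> Pow (A - W)"
        by auto
      then show "Z \<in> (\<lambda>Y. W \<union> Y) ` Pow (A - W)"
        by (rule image_eqI)
    qed (use W in auto)
    moreover have "inj_on (\<lambda>Y. W \<union> Y) (Pow (A - W))"
      by (rule inj_onI) blast
    ultimately show "(\<Sum>Z\<in>{Z \<in> Pow A. W \<subseteq> Z}. g W Z) = (\<Sum>Y\<in>Pow (A - W). g W (W \<union> Y))"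
      by (simp add: sum.reindex)
  qed
  finally show ?thesis .
qed

definition subset_conv :: "('a set \<Rightarrow> 'b::comm_semiring_1) \<Rightarrow> ('a set \<Rightarrow> 'b) \<Rightarrow> 'a set \<Rightarrow> 'b" where
  "subset_conv f g X = (\<Sum>Z\<in>Pow X. f Z * g (X - Z))"

lemma subset_conv_cong:
  assumes "\<And>Z. Z \<subseteq> X \<Longrightarrow> f Z = f' Z" "\<And>Z. Z \<subseteq> X \<Longrightarrow> g Z = g' Z"
  shows "subset_conv f g X = subset_conv f' g' X"
  unfolding subset_conv_def using assms by (intro sum.cong) auto

lemma subset_conv_unit_right:
  assumes "finite X"
  shows "subset_conv f (\<lambda>Z. if Z = {} then 1 else 0) X = f X"
proof -
  have "(\<Sum>Z\<in>Pow X. f Z * (if X - Z = {} then 1 else 0)) = (\<Sum>Z\<in>Pow X. if Z = X then f Z else 0)"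
    by (intro sum.cong) auto
  then show ?thesis
    unfolding subset_conv_def using assms by simp
qed

lemma subset_conv_unit_left:
  assumes "finite X"
  shows "subset_conv (\<lambda>Z. if Z = {} then 1 else 0) g X = g X"
proof -
  have "(\<Sum>Z\<in>Pow X. (if Z = {} then 1 else 0) * g (X - Z)) = (\<Sum>Z\<in>Pow X. if Z = {} then g X else 0)"
    by (intro sum.cong) auto
  then show ?thesis
    unfolding subset_conv_def using assms by simp
qed

lemma subset_conv_assoc:
  assumes "finite X"
  shows "subset_conv (subset_conv f g) h X = subset_conv f (subset_conv g h) X"
proof -
  have "subset_conv (subset_conv f g) h X = (\<Sum>Z\<in>Pow X. \<Sum>W\<in>Pow Z. f W * g (Z - W) * h (X - Z))"
    unfolding subset_conv_def by (simp add: sum_distrib_right)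
  also have "\<dots> = (\<Sum>W\<in>Pow X. \<Sum>Y\<in>Pow (X - W). f W * g (W \<union> Y - W) * h (X - (W \<union> Y)))"
    by (rule sum_Pow_Pow_swap[OF assms])
  also have "\<dots> = (\<Sum>W\<in>Pow X. \<Sum>Y\<in>Pow (X - W). f W * (g Y * h (X - W - Y)))"
  proof (intro sum.cong refl)
    fix W Y assume "Y \<in> Pow (X - W)"
    then have "W \<union> Y - W = Y" "X - (W \<union> Y) = X - W - Y"
      by auto
    then show "f W * g (W \<union> Y - W) * h (X - (W \<union> Y)) = f W * (g Y * h (X - W - Y))"
      by (simp add: mult.assoc)
  qed
  also have "\<dots> = subset_conv f (subset_conv g h) X"
    unfolding subset_conv_def by (simp add: sum_distrib_left)
  finally show ?thesis .
qed

lemma subset_conv_commute: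
  fixes f g :: "'a set \<Rightarrow> 'b::comm_semiring_1"
  shows "subset_conv f g X = subset_conv g f X"
  unfolding subset_conv_def
  by (rule sum.reindex_bij_witness[where i = "\<lambda>Z. X - Z" and j = "\<lambda>Z. X - Z"])
    (auto simp: double_diff mult.commute)

lemma subset_conv_split:
  assumes "finite X" "i \<in> X"
  shows "subset_conv f g X =
    (\<Sum>Y\<in>Pow (X - {i}). f Y * g (X - Y)) + (\<Sum>Y\<in>Pow (X - {i}). g Y * f (X - Y))"
proof -
  have "(\<Sum>Y\<in>Pow (X - {i}). f (insert i Y) * g (X - insert i Y)) =
      (\<Sum>Y\<in>Pow (X - {i}). g Y * f (X - Y))"
  proof (rule sum.reindex_bij_witness[where i = "\<lambda>Y. X - {i} - Y" and j = "\<lambda>Y. X - {i} - Y"])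
    fix Y assume "Y \<in> Pow (X - {i})"
    then have "X - {i} - Y = X - insert i Y" "X - (X - {i} - Y) = insert i Y"
      using assms(2) by auto
    then show "g (X - {i} - Y) * f (X - (X - {i} - Y)) = f (insert i Y) * g (X - insert i Y)"
      by (simp add: mult.commute)
  qed auto
  then show ?thesis
    unfolding subset_conv_def using sum_Pow_split[OF assms(1), of "\<lambda>Z. f Z * g (X - Z)" i] assms(2) by simp
qed

lemma of_int_subset_conv:
  "of_int (subset_conv f g X) = subset_conv (\<lambda>Z. of_int (f Z)) (\<lambda>Z. of_int (g Z)) X"
  unfolding subset_conv_def by simp

section \<open>Linear recurrences\<close>

lemma vanishing_combination_lift:
  fixes v :: "'i \<Rightarrow> 's \<Rightarrow> 'a::field"
  assumes "finite I" "p \<in> I" "v p a \<noteq> 0" "\<exists>i\<in>I - {p}. c i \<noteq> 0"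
    "\<forall>s. (\<Sum>i\<in>I - {p}. c i * (v i s - v i a / v p a * v p s)) = 0"
  shows "\<exists>c'. (\<exists>i\<in>I. c' i \<noteq> 0) \<and> (\<forall>s. (\<Sum>i\<in>I. c' i * v i s) = 0)"
proof -
  define c' where "c' i = (if i = p then - (\<Sum>j\<in>I - {p}. c j * v j a) / v p a else c i)" for i
  have "(\<Sum>i\<in>I. c' i * v i s) = 0" for s
  proof -
    have "(\<Sum>i\<in>I. c' i * v i s) = c' p * v p s + (\<Sum>i\<in>I - {p}. c i * v i s)"
      using assms(1,2) unfolding c'_def by (simp add: sum.remove)
    also have "(\<Sum>i\<in>I - {p}. c i * v i s) =
        (\<Sum>i\<in>I - {p}. c i * (v i s - v i a / v p a * v p s)) + (\<Sum>j\<in>I - {p}. c j * v j a) / v p a * v p s"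
      by (simp add: algebra_simps sum.distrib sum_distrib_left sum_distrib_right sum_divide_distrib sum_subtractf)
    finally show ?thesis
      using assms(5) by (simp add: c'_def)
  qed
  moreover have "\<exists>i\<in>I. c' i \<noteq> 0"
    using assms(4) unfolding c'_def by auto
  ultimately show ?thesis
    by blast
qed

lemma exists_nontrivial_vanishing_combination:
  fixes v :: "'i \<Rightarrow> 's \<Rightarrow> 'a::field"
  assumes "finite A" "finite I" "card A < card I" "\<forall>i\<in>I. \<forall>s. s \<notin> A \<longrightarrow> v i s = 0"
  shows "\<exists>c. (\<exists>i\<in>I. c i \<noteq> 0) \<and> (\<forall>s. (\<Sum>i\<in>I. c i * v i s) = 0)"
  using assms
proof (induction A arbitrary: I v rule: finite_induct)
  case empty
  then obtain i0 where "i0 \<in> I"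
    by fastforce
  then show ?case
    using empty by (intro exI[of _ "\<lambda>i. if i = i0 then 1 else 0"]) auto
next
  case (insert a A)
  show ?case
  proof (cases "\<forall>i\<in>I. v i a = 0")
    case True
    then have "\<forall>i\<in>I. \<forall>s. s \<notin> A \<longrightarrow> v i s = 0"
      using insert.prems(3) by (metis insertE)
    then show ?thesis
      using insert.IH insert.prems(1,2) insert.hyps by simp
  next
    case False
    then obtain p where p: "p \<in> I" "v p a \<noteq> 0"
      by blast
    \<comment> \<open>Gaussian elimination of the coordinate a using the vector v p.\<close>
    define w where "w i s = v i s - v i a / v p a * v p s" for i s
    have "card A < card (I - {p})"
      using insert p by (simp add: card_Diff_singleton)
    moreover have "\<forall>i\<in>I - {p}. \<forall>s. s \<notin> A \<longrightarrow> w i s = 0"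
    proof (intro ballI allI impI)
      fix i s assume "i \<in> I - {p}" "s \<notin> A"
      then show "w i s = 0"
        using insert.prems(3) p unfolding w_def by (cases "s = a") auto
    qed
    ultimately obtain c where c: "\<exists>i\<in>I - {p}. c i \<noteq> 0" "\<forall>s. (\<Sum>i\<in>I - {p}. c i * w i s) = 0"
      using insert.IH insert.prems(1) by blast
    then show ?thesis
      using vanishing_combination_lift[where v = v and a = a, OF insert.prems(1) p]
      unfolding w_def by blast
  qed
qed

lemma exists_vanishing_combination_nonzero_first:
  fixes v :: "nat \<Rightarrow> 's \<Rightarrow> 'a::field"
  assumes "finite A" "\<And>i s. s \<notin> A \<Longrightarrow> v i s = 0"
  shows "\<exists>j d b. b 0 \<noteq> 0 \<and> (\<forall>s. (\<Sum>k\<le>d. b k * v (j + k) s) = 0)"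
proof -
  obtain c where c: "\<exists>i\<in>{..card A}. c i \<noteq> 0" "\<forall>s. (\<Sum>i\<le>card A. c i * v i s) = 0"
    using exists_nontrivial_vanishing_combination[of A "{..card A}" v] assms by auto
  define j where "j = (LEAST i. c i \<noteq> 0)"
  obtain i where i: "i \<le> card A" "c i \<noteq> 0"
    using c(1) by blast
  have j: "c j \<noteq> 0" "j \<le> card A" "\<And>i. i < j \<Longrightarrow> c i = 0"
  proof -
    show "c j \<noteq> 0"
      unfolding j_def using i(2) by (rule LeastI)
    show "j \<le> card A"
      unfolding j_def using Least_le[of "\<lambda>i. c i \<noteq> 0", OF i(2)] i(1) by linarith
    show "c i = 0" if "i < j" for i
      using not_less_Least[of i "\<lambda>i. c i \<noteq> 0"] that unfolding j_def by blast
  qed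
  have "(\<Sum>k\<le>card A - j. c (j + k) * v (j + k) s) = 0" for s
  proof -
    have "(\<Sum>i\<le>card A. c i * v i s) = (\<Sum>i\<in>{j..card A}. c i * v i s)"
      using j(3) by (intro sum.mono_neutral_right) auto
    also have "\<dots> = (\<Sum>k\<le>card A - j. c (j + k) * v (j + k) s)"
      using sum.shift_bounds_cl_nat_ivl[of "\<lambda>i. c i * v i s" 0 j "card A - j"] j(2)
      by (simp add: atLeast0AtMost add.commute)
    finally show ?thesis
      using c(2) by simp
  qed
  then show ?thesis
    using j(1) by (intro exI[of _ j] exI[of _ "card A - j"] exI[of _ "\<lambda>k. c (j + k)"]) simp
qed

lemma backward_orbit_recurrence:
  fixes u :: "int \<Rightarrow> 's \<Rightarrow> 'a::field"
  assumes "finite A" "\<And>n s. s \<notin> A \<Longrightarrow> u n s = 0" "\<And>n. u n = L (u (n + 1))"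
    and L_sum: "\<And>(c :: nat \<Rightarrow> 'a) f D. L (\<lambda>s. \<Sum>k\<le>D. c k * f k s) = (\<lambda>s. \<Sum>k\<le>D. c k * L (f k) s)"
  shows "\<exists>d b. b 0 \<noteq> 0 \<and> (\<forall>n \<le> N. \<forall>s. (\<Sum>k\<le>d. b k * u (n + int k) s) = 0)"
proof -
  obtain j d b where "b 0 \<noteq> 0" and start: "\<And>s. (\<Sum>k\<le>d. b k * u (N + int (j + k)) s) = 0"
    using exists_vanishing_combination_nonzero_first[of A "\<lambda>i. u (N + int i)"] assms(1,2) by blast
  have L_zero: "L (\<lambda>s. 0) = (\<lambda>s. 0)"
    using L_sum[of "\<lambda>_. 0" "\<lambda>_. u 0" 0] by simp
  have shift: "(\<Sum>k\<le>d. b k * u (N + int j - int t + int k) s) = 0" for t s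
  proof (induction t arbitrary: s)
    case 0
    then show ?case
      using start by (simp add: add.assoc)
  next
    case (Suc t)
    have "u (N + int j - int (Suc t) + int k) = L (u (N + int j - int t + int k))" for k
      using assms(3)[of "N + int j - int (Suc t) + int k"] by (simp add: algebra_simps)
    then have "(\<lambda>s. \<Sum>k\<le>d. b k * u (N + int j - int (Suc t) + int k) s)
        = L (\<lambda>s. \<Sum>k\<le>d. b k * u (N + int j - int t + int k) s)"
      by (simp add: L_sum)
    also have "\<dots> = (\<lambda>s. 0)"
      using Suc.IH L_zero by simp
    finally show ?case
      by (simp add: fun_eq_iff)
  qed
  have "(\<Sum>k\<le>d. b k * u (n + int k) s) = 0" if "n \<le> N" for n s
    using shift[of "nat (N + int j - n)" s] that by simp
  then show ?thesis
    using \<open>b 0 \<noteq> 0\<close> by blast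
qed

lemma recurrence_vanishes_backward:
  fixes x :: "int \<Rightarrow> 'a::idom"
  assumes "b 0 \<noteq> 0" "\<And>n. n < N \<Longrightarrow> (\<Sum>k\<le>d. b k * x (n + int k)) = 0" "\<And>n. N \<le> n \<Longrightarrow> x n = 0"
  shows "x n = 0"
proof -
  have "\<forall>k \<ge> n'. x k = 0" if "n' \<le> N" for n'
    using that
  proof (induction n' rule: int_le_induct)
    case base
    then show ?case
      using assms(3) by simp
  next
    case (step i)
    have "(\<Sum>k<d. b (Suc k) * x (i - 1 + int (Suc k))) = 0"
      using step.IH by (intro sum.neutral) auto
    moreover have "(\<Sum>k\<le>d. b k * x (i - 1 + int k)) = 0"
      using assms(2) step.hyps by simp
    ultimately have "x (i - 1) = 0"
      using assms(1) by (simp add: sum.atMost_shift)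
    show ?case
    proof (intro allI impI)
      fix k assume "i - 1 \<le> k"
      then show "x k = 0"
        using \<open>x (i - 1) = 0\<close> step.IH by (cases "k = i - 1") auto
    qed
  qed
  then show ?thesis
    using assms(3) by (cases "n \<le> N") auto
qed

lemma recurrence_determines_backward:
  fixes x y :: "int \<Rightarrow> 'a::idom"
  assumes "b 0 \<noteq> 0" "\<And>n. (\<Sum>k\<le>d. b k * x (n + int k)) = 0" "\<And>n. (\<Sum>k\<le>d. b k * y (n + int k)) = 0"
    "\<And>n. N \<le> n \<Longrightarrow> x n = y n"
  shows "x n = y n"
proof -
  have "(\<Sum>k\<le>d. b k * (x (n + int k) - y (n + int k))) = 0" for n
    using assms(2,3)[of n] by (simp add: algebra_simps sum_subtractf)
  then have "x n - y n = 0"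
    by (rule recurrence_vanishes_backward[where b = b and N = N, OF assms(1)]) (use assms(4) in auto)
  then show ?thesis
    by simp
qed

section \<open>Perfect matchings\<close>

lemma perfect_matchings_iff:
  "P \<in> perfect_matchings V E \<longleftrightarrow> P \<subseteq> E \<and> (\<forall>v\<in>V. \<exists>e\<in>P. v \<in> e)
     \<and> (\<forall>v\<in>V. \<forall>e\<in>P. \<forall>e'\<in>P. v \<in> e \<longrightarrow> v \<in> e' \<longrightarrow> e = e')"
  unfolding perfect_matchings_def by blast

lemma perfect_matchings_finite: "finite E \<Longrightarrow> finite (perfect_matchings V E)"
  unfolding perfect_matchings_def by (rule finite_subset[of _ "Pow E"]) auto

lemma perfect_matchings_subset: "P \<in> perfect_matchings V E \<Longrightarrow> P \<subseteq> E"
  unfolding perfect_matchings_def by blast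

lemma perfect_matchings_cover:
  "P \<in> perfect_matchings V E \<Longrightarrow> v \<in> V \<Longrightarrow> \<exists>e\<in>P. v \<in> e"
  unfolding perfect_matchings_iff by blast

lemma perfect_matchings_unique:
  "P \<in> perfect_matchings V E \<Longrightarrow> v \<in> V \<Longrightarrow> e \<in> P \<Longrightarrow> e' \<in> P \<Longrightarrow> v \<in> e \<Longrightarrow> v \<in> e'
    \<Longrightarrow> e = e'"
  unfolding perfect_matchings_iff by blast

lemma perfect_matchings_remove_edge:
  assumes Q: "insert e P \<in> perfect_matchings V E" and "e \<subseteq> V" "e \<notin> P"
  shows "P \<in> perfect_matchings (V - e) {e' \<in> E. e' \<inter> e = {}}"
proof -
  have disj: "x \<inter> e = {}" if x: "x \<in> P" for x
  proof (rule ccontr)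
    assume "x \<inter> e \<noteq> {}"
    then obtain v where "v \<in> x" "v \<in> e" by blast
    then have "x = e"
      using perfect_matchings_unique[OF Q, of v x e] assms(2) x by blast
    then show False
      using assms(3) x by blast
  qed
  show ?thesis
    unfolding perfect_matchings_iff
  proof (intro conjI ballI impI)
    show "P \<subseteq> {e' \<in> E. e' \<inter> e = {}}"
      using perfect_matchings_subset[OF Q] disj by blast
  next
    fix v assume "v \<in> V - e"
    then show "\<exists>x\<in>P. v \<in> x"
      using perfect_matchings_cover[OF Q, of v] by blast
  next
    fix v x y assume "v \<in> V - e" "x \<in> P" "y \<in> P" "v \<in> x" "v \<in> y"
    then show "x = y"
      using perfect_matchings_unique[OF Q, of v x y] by blast
  qed
qed

lemma perfect_matchings_add_edge:
  assumes P: "P \<in> perfect_matchings (V - e) {e' \<in> E. e' \<inter> e = {}}" and "e \<in> E"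
  shows "insert e P \<in> perfect_matchings V E"
  unfolding perfect_matchings_iff
proof (intro conjI ballI impI)
  show "insert e P \<subseteq> E"
    using perfect_matchings_subset[OF P] assms(2) by blast
next
  fix v assume "v \<in> V"
  then show "\<exists>x\<in>insert e P. v \<in> x"
    using perfect_matchings_cover[OF P, of v] by blast
next
  fix v x y assume v: "v \<in> V" and xy: "x \<in> insert e P" "y \<in> insert e P" "v \<in> x" "v \<in> y"
  show "x = y"
  proof (cases "v \<in> e")
    case True
    then show ?thesis
      using perfect_matchings_subset[OF P] xy by blast
  next
    case False
    then show ?thesis
      using perfect_matchings_unique[OF P, of v x y] v xy by blast
  qed
qed

lemma perfect_matchings_containing:
  assumes "e \<in> E" "e \<subseteq> V" "e \<noteq> {}"
  shows "{P \<in> perfect_matchings V E. e \<in> P} =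
    insert e ` perfect_matchings (V - e) {e' \<in> E. e' \<inter> e = {}}"
proof (intro set_eqI iffI)
  fix Q assume "Q \<in> {P \<in> perfect_matchings V E. e \<in> P}"
  then have "insert e (Q - {e}) \<in> perfect_matchings V E" "Q = insert e (Q - {e})"
    by (simp_all add: insert_absorb)
  then show "Q \<in> insert e ` perfect_matchings (V - e) {e' \<in> E. e' \<inter> e = {}}"
    using perfect_matchings_remove_edge[of e "Q - {e}" V E] assms(2) by blast
next
  fix Q assume "Q \<in> insert e ` perfect_matchings (V - e) {e' \<in> E. e' \<inter> e = {}}"
  then show "Q \<in> {P \<in> perfect_matchings V E. e \<in> P}"
    using perfect_matchings_add_edge[OF _ assms(1)] by blast
qed

lemma sum_perfect_matchings_containing:
  assumes "finite E" "e \<in> E" "e \<subseteq> V" "e \<noteq> {}"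
  shows "(\<Sum>P\<in>{P \<in> perfect_matchings V E. e \<in> P}. \<Prod>x\<in>P. sg x) =
    sg e * Msigned (V - e) {e' \<in> E. e' \<inter> e = {}} sg"
proof -
  let ?PM' = "perfect_matchings (V - e) {e' \<in> E. e' \<inter> e = {}}"
  have fresh: "e \<notin> P" "finite P" if "P \<in> ?PM'" for P
  proof -
    have "P \<subseteq> {e' \<in> E. e' \<inter> e = {}}"
      using perfect_matchings_subset[OF that] .
    then show "e \<notin> P" "finite P"
      using assms(1,4) by (auto intro: finite_subset)
  qed
  then have "inj_on (insert e) ?PM'"
    by (intro inj_onI) (metis insert_ident)
  then have "(\<Sum>P\<in>{P \<in> perfect_matchings V E. e \<in> P}. \<Prod>x\<in>P. sg x) = (\<Sum>P\<in>?PM'. \<Prod>x\<in>insert e P. sg x)"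
    by (simp add: perfect_matchings_containing[OF assms(2-4)] sum.reindex)
  also have "\<dots> = sg e * Msigned (V - e) {e' \<in> E. e' \<inter> e = {}} sg"
    unfolding Msigned_def sum_distrib_left using fresh by (intro sum.cong) auto
  finally show ?thesis .
qed

lemma Msigned_expand:
  assumes "finite E" "\<forall>e\<in>E. e \<subseteq> V" "v \<in> V"
  shows "Msigned V E sg =
    (\<Sum>e\<in>{e \<in> E. v \<in> e}. sg e * Msigned (V - e) {e' \<in> E. e' \<inter> e = {}} sg)"
proof -
  let ?PM = "\<lambda>e. {P \<in> perfect_matchings V E. e \<in> P}"
  have "perfect_matchings V E = (\<Union>e\<in>{e \<in> E. v \<in> e}. ?PM e)"
    using perfect_matchings_cover[of _ V E v] perfect_matchings_subset[of _ V E] assms(3) by blast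
  then have "Msigned V E sg = (\<Sum>P\<in>(\<Union>e\<in>{e \<in> E. v \<in> e}. ?PM e). \<Prod>x\<in>P. sg x)"
    unfolding Msigned_def by (subst (1) \<open>perfect_matchings V E = _\<close>) (rule refl)
  also have "\<dots> = (\<Sum>e\<in>{e \<in> E. v \<in> e}. \<Sum>P\<in>?PM e. \<Prod>x\<in>P. sg x)"
  proof (rule sum.UNION_disjoint)
    show "finite {e \<in> E. v \<in> e}"
      using assms(1) by simp
    show "\<forall>e\<in>{e \<in> E. v \<in> e}. finite (?PM e)"
      using perfect_matchings_finite[OF assms(1)] by simp
    have "e = e'" if "e \<in> {e \<in> E. v \<in> e}" "e' \<in> {e \<in> E. v \<in> e}" "P \<in> ?PM e \<inter> ?PM e'"
      for e e' P
      using perfect_matchings_unique[of P V E v e e'] that assms(3) by simp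
    then show "\<forall>e\<in>{e \<in> E. v \<in> e}. \<forall>e'\<in>{e \<in> E. v \<in> e}. e \<noteq> e' \<longrightarrow> ?PM e \<inter> ?PM e' = {}"
      by blast
  qed
  also have "\<dots> = (\<Sum>e\<in>{e \<in> E. v \<in> e}. sg e * Msigned (V - e) {e' \<in> E. e' \<inter> e = {}} sg)"
    using assms by (intro sum.cong refl sum_perfect_matchings_containing) auto
  finally show ?thesis .
qed

lemma Msigned_add_zero_edges:
  assumes "E \<subseteq> E'" "finite E'" "\<forall>e\<in>E. sg' e = sg e" "\<forall>e\<in>E' - E. sg' e = 0"
  shows "Msigned V E' sg' = Msigned V E sg"
proof -
  have "Msigned V E' sg' = (\<Sum>P\<in>perfect_matchings V E. \<Prod>e\<in>P. sg' e)"
    unfolding Msigned_def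
  proof (rule sum.mono_neutral_right)
    show "perfect_matchings V E \<subseteq> perfect_matchings V E'"
      using assms(1) unfolding perfect_matchings_def by auto
    show "\<forall>P\<in>perfect_matchings V E' - perfect_matchings V E. (\<Prod>e\<in>P. sg' e) = 0"
    proof
      fix P assume P: "P \<in> perfect_matchings V E' - perfect_matchings V E"
      then have "P \<subseteq> E'" "\<not> P \<subseteq> E"
        unfolding Diff_iff perfect_matchings_iff by blast+
      then obtain e where "e \<in> P" "e \<in> E' - E" "P \<subseteq> E'"
        by blast
      then show "(\<Prod>e\<in>P. sg' e) = 0"
        using assms(2,4) by (meson finite_subset prod_zero)
    qed
  qed (use assms(2) perfect_matchings_finite in auto)
  also have "\<dots> = Msigned V E sg"
    unfolding Msigned_def using assms(3)
    by (intro sum.cong prod.cong) (auto simp: perfect_matchings_def)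
  finally show ?thesis .
qed

section \<open>Matchings in a horizontal strip\<close>

definition strip_edges :: "nat \<Rightarrow> (int \<times> int) set set" where
  "strip_edges m = {{(i, j), (i, j + 1)} | i j. 1 \<le> i \<and> i \<le> int m}
     \<union> {{(i, j), (i + 1, j)} | i j. 1 \<le> i \<and> i + 1 \<le> int m}"

definition edge_weight :: "(int \<Rightarrow> int) \<Rightarrow> (int \<times> int) set \<Rightarrow> int" where
  "edge_weight \<sigma> e = (if card (snd ` e) = 1 then \<sigma> (Min (snd ` e)) else 1)"

definition strip_msum :: "nat \<Rightarrow> (int \<Rightarrow> int) \<Rightarrow> (int \<times> int) set \<Rightarrow> int" where
  "strip_msum m \<sigma> V = Msigned V {e \<in> strip_edges m. e \<subseteq> V} (edge_weight \<sigma>)"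

lemma edge_weight_horizontal [simp]: "edge_weight \<sigma> {(i, j), (i, j + 1)} = 1"
  unfolding edge_weight_def by simp

lemma edge_weight_vertical [simp]: "edge_weight \<sigma> {(i, j), (i + 1, j)} = \<sigma> j"
  unfolding edge_weight_def by simp

lemma strip_msum_empty [simp]: "strip_msum m \<sigma> {} = 1"
proof -
  have "{e \<in> strip_edges m. e \<subseteq> {}} = {}"
    unfolding strip_edges_def by auto
  then have "perfect_matchings {} {e \<in> strip_edges m. e \<subseteq> {}} = {{}}"
    unfolding perfect_matchings_def by auto
  then show ?thesis
    unfolding strip_msum_def Msigned_def by simp
qed

lemma strip_msum_expand:
  assumes "finite V" "v \<in> V"
  shows "strip_msum m \<sigma> V =
    (\<Sum>e\<in>{e \<in> strip_edges m. e \<subseteq> V \<and> v \<in> e}. edge_weight \<sigma> e * strip_msum m \<sigma> (V - e))"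
proof -
  let ?E = "{e \<in> strip_edges m. e \<subseteq> V}"
  have "finite ?E"
    by (rule finite_subset[of _ "Pow V"]) (use assms(1) in auto)
  then have "strip_msum m \<sigma> V =
      (\<Sum>e\<in>{e \<in> ?E. v \<in> e}. edge_weight \<sigma> e * Msigned (V - e) {e' \<in> ?E. e' \<inter> e = {}} (edge_weight \<sigma>))"
    unfolding strip_msum_def by (rule Msigned_expand) (use assms(2) in auto)
  moreover have "{e' \<in> ?E. e' \<inter> e = {}} = {e' \<in> strip_edges m. e' \<subseteq> V - e}" for e
    by blast
  ultimately show ?thesis
    unfolding strip_msum_def by simp
qed

lemma strip_edges_horizontal: "1 \<le> i \<Longrightarrow> i \<le> int m \<Longrightarrow> {(i, j), (i, j + 1)} \<in> strip_edges m"
  unfolding strip_edges_def by blast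

lemma strip_edges_vertical: "1 \<le> i \<Longrightarrow> i + 1 \<le> int m \<Longrightarrow> {(i, j), (i + 1, j)} \<in> strip_edges m"
  unfolding strip_edges_def by blast

lemma strip_edges_cases:
  assumes "e \<in> strip_edges m"
  obtains i j where "e = {(i, j), (i, j + 1)}" | i j where "e = {(i, j), (i + 1, j)}"
  using assms unfolding strip_edges_def by blast

lemma strip_edges_at_min:
  assumes "\<forall>p\<in>B. snd p < c" "S \<subseteq> {1..int m}" "i \<in> S" "\<forall>x\<in>S. i \<le> x"
  shows "{e \<in> strip_edges m. e \<subseteq> B \<union> S \<times> {c} \<and> (i, c) \<in> e} =
    (if (i, c - 1) \<in> B then {{(i, c - 1), (i, c)}} else {})
    \<union> (if i + 1 \<in> S then {{(i, c), (i + 1, c)}} else {})"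
    (is "?L = ?R")
proof
  show "?L \<subseteq> ?R"
  proof
    fix e assume "e \<in> ?L"
    then have e: "e \<in> strip_edges m" "e \<subseteq> B \<union> S \<times> {c}" "(i, c) \<in> e"
      by auto
    have out: "i - 1 \<notin> S" "(i, c + 1) \<notin> B" "(i + 1, c) \<notin> B" "(i - 1, c) \<notin> B"
      using assms(1,4) by force+
    from e(1) show "e \<in> ?R"
    proof (cases rule: strip_edges_cases)
      case (1 a b)
      then have "(a, b) = (i, c) \<or> (a, b) = (i, c - 1)"
        using e(3) by auto
      then show ?thesis
        using 1 e(2) out by auto
    next
      case (2 a b)
      then have "(a, b) = (i, c) \<or> (a, b) = (i - 1, c)"
        using e(3) by auto
      then show ?thesis
        using 2 e(2) out by auto
    qed
  qed
next
  have "1 \<le> i" "i \<le> int m"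
    using assms(2,3) by auto
  then have "{(i, c - 1), (i, c)} \<in> strip_edges m" "i + 1 \<in> S \<Longrightarrow> {(i, c), (i + 1, c)} \<in> strip_edges m"
    using strip_edges_horizontal[of i m "c - 1"] strip_edges_vertical[of i m c] assms(2) by auto
  then show "?R \<subseteq> ?L"
    using assms(3) by auto
qed

lemma strip_msum_expand_min:
  assumes "finite B" "\<forall>p\<in>B. snd p < c" "S \<subseteq> {1..int m}" "i \<in> S" "\<forall>x\<in>S. i \<le> x"
  shows "strip_msum m \<sigma> (B \<union> S \<times> {c}) =
      (if (i, c - 1) \<in> B then strip_msum m \<sigma> (B - {(i, c - 1)} \<union> (S - {i}) \<times> {c}) else 0)
    + (if i + 1 \<in> S then \<sigma> c * strip_msum m \<sigma> (B \<union> (S - {i, i + 1}) \<times> {c}) else 0)"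
proof -
  have "finite (B \<union> S \<times> {c})"
    using assms(1,3) finite_subset by blast
  moreover have "B \<union> S \<times> {c} - {(i, c - 1), (i, c)} = B - {(i, c - 1)} \<union> (S - {i}) \<times> {c}"
    "B \<union> S \<times> {c} - {(i, c), (i + 1, c)} = B \<union> (S - {i, i + 1}) \<times> {c}"
    using assms(2) by auto
  moreover have "{(i, c - 1), (i, c)} \<noteq> {(i, c), (i + 1, c)}"
    by (auto simp: doubleton_eq_iff)
  moreover have "edge_weight \<sigma> {(i, c - 1), (i, c)} = 1"
    using edge_weight_horizontal[of \<sigma> i "c - 1"] by simp
  ultimately show ?thesis
    using assms(4) by (simp add: strip_msum_expand[of _ "(i, c)"] strip_edges_at_min[OF assms(2-5)])
qed

definition column_msum :: "nat \<Rightarrow> int \<Rightarrow> int set \<Rightarrow> int" where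
  "column_msum m s W = strip_msum m (\<lambda>_. s) (W \<times> {0})"

lemma column_msum_empty [simp]: "column_msum m s {} = 1"
  unfolding column_msum_def by simp

lemma column_msum_expand:
  assumes "W \<subseteq> {1..int m}" "i \<in> W" "\<forall>x\<in>W. i \<le> x"
  shows "column_msum m s W = (if i + 1 \<in> W then s * column_msum m s (W - {i, i + 1}) else 0)"
  using strip_msum_expand_min[of "{}" 0 W m i "\<lambda>_. s"] assms unfolding column_msum_def by simp

lemma column_msum_zero_weight:
  assumes "W \<subseteq> {1..int m}"
  shows "column_msum m 0 W = (if W = {} then 1 else 0)"
proof (cases "W = {}")
  case False
  moreover have "finite W"
    using assms by (rule finite_subset) simp
  ultimately have "Min W \<in> W" "\<forall>x\<in>W. Min W \<le> x"
    by auto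
  then show ?thesis
    using column_msum_expand[OF assms] False by simp
qed simp

lemma strip_msum_column:
  assumes "W \<subseteq> {1..int m}"
  shows "strip_msum m \<sigma> (W \<times> {c}) = column_msum m (\<sigma> c) W"
proof -
  have "finite W"
    using assms finite_subset by blast
  then show ?thesis
    using assms
  proof (induction W rule: finite_psubset_induct)
    case (psubset W)
    show ?case
    proof (cases "W = {}")
      case False
      define i where "i = Min W"
      have i: "i \<in> W" "\<forall>x\<in>W. i \<le> x"
        using psubset False i_def by auto
      then have "W - {i, i + 1} \<subset> W" "W - {i, i + 1} \<subseteq> {1..int m}"
        using psubset by auto
      then show ?thesis
        using strip_msum_expand_min[of "{}" c W m i \<sigma>] column_msum_expand[of W m i] psubset i
        by simp
    qed simp
  qed
qed

lemma sum_Pow_column_msum_min: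
  assumes S: "S \<subseteq> {1..int m}" and i: "i \<in> S" "\<forall>x\<in>S. i \<le> x" and A: "A \<subseteq> S - {i}"
  shows "(\<Sum>Z\<in>Pow A. g Z * column_msum m s (S - Z)) = (if i + 1 \<in> S
    then s * (\<Sum>Z\<in>Pow (A - {i + 1}). g Z * column_msum m s (S - {i, i + 1} - Z)) else 0)"
proof -
  have expand: "column_msum m s (S - Z) =
      (if i + 1 \<in> S - Z then s * column_msum m s (S - {i, i + 1} - Z) else 0)"
    if "Z \<in> Pow A" for Z
  proof -
    have Z: "S - Z \<subseteq> {1..int m}" "i \<in> S - Z" "\<forall>x\<in>S - Z. i \<le> x"
      "S - Z - {i, i + 1} = S - {i, i + 1} - Z"
      using that S i A by auto
    show ?thesis
      using column_msum_expand[OF Z(1-3), of s] unfolding Z(4) .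
  qed
  show ?thesis
  proof (cases "i + 1 \<in> S")
    case True
    have "finite A"
      using finite_subset[of A "{1..int m}"] S A by auto
    have "(\<Sum>Z\<in>Pow A. g Z * column_msum m s (S - Z)) =
        (\<Sum>Z\<in>Pow A. if i + 1 \<in> Z then 0 else s * (g Z * column_msum m s (S - {i, i + 1} - Z)))"
      using expand True by (intro sum.cong) auto
    also have "\<dots> = s * (\<Sum>Z\<in>Pow (A - {i + 1}). g Z * column_msum m s (S - {i, i + 1} - Z))"
      by (simp add: sum_Pow_avoiding[OF \<open>finite A\<close>] sum_distrib_left)
    finally show ?thesis
      using True by simp
  qed (use expand in simp)
qed

lemma subset_conv_column_msum_min:
  assumes W: "W \<subseteq> {1..int m}" and i: "i \<in> W" "\<forall>x\<in>W. i \<le> x"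
  shows "subset_conv (column_msum m s) (column_msum m t) W = (if i + 1 \<in> W
    then (s + t) * subset_conv (column_msum m s) (column_msum m t) (W - {i, i + 1}) else 0)"
proof -
  have "finite W"
    using W by (rule finite_subset) simp
  have "W - {i} - {i + 1} = W - {i, i + 1}"
    by auto
  then have "(\<Sum>Y\<in>Pow (W - {i}). column_msum m r Y * column_msum m r' (W - Y)) = (if i + 1 \<in> W
      then r' * subset_conv (column_msum m r) (column_msum m r') (W - {i, i + 1}) else 0)" for r r'
    using sum_Pow_column_msum_min[OF W i, of "W - {i}" "column_msum m r" r']
    by (simp add: subset_conv_def)
  then show ?thesis
    using subset_conv_split[OF \<open>finite W\<close> i(1), of "column_msum m s" "column_msum m t"]
      subset_conv_commute[of "column_msum m t" "column_msum m s"]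
    by (simp add: distrib_right)
qed

lemma column_msum_conv:
  assumes "W \<subseteq> {1..int m}"
  shows "subset_conv (column_msum m s) (column_msum m t) W = column_msum m (s + t) W"
proof -
  have "finite W"
    using assms by (rule finite_subset) simp
  then show ?thesis
    using assms
  proof (induction W rule: finite_psubset_induct)
    case (psubset W)
    show ?case
    proof (cases "W = {}")
      case False
      define i where "i = Min W"
      have i: "i \<in> W" "\<forall>x\<in>W. i \<le> x"
        using psubset False i_def by auto
      have "W - {i, i + 1} \<subset> W" "W - {i, i + 1} \<subseteq> {1..int m}"
        using i(1) psubset(3) by auto
      then show ?thesis
        using subset_conv_column_msum_min[OF psubset(3) i] column_msum_expand[OF psubset(3) i]
          psubset.IH by simp
    qed (simp add: subset_conv_def)
  qed
qed

lemma strip_msum_expand_min_column: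
  assumes "finite B" "\<forall>p\<in>B. snd p < c" "finite X" "S \<subseteq> {1..int m}" "i \<in> S" "\<forall>x\<in>S. i \<le> x"
  shows "strip_msum m \<sigma> (B \<union> X \<times> {c} \<union> S \<times> {c + 1}) =
      (if i \<in> X then strip_msum m \<sigma> (B \<union> (X - {i}) \<times> {c} \<union> (S - {i}) \<times> {c + 1}) else 0)
    + (if i + 1 \<in> S then \<sigma> (c + 1) * strip_msum m \<sigma> (B \<union> X \<times> {c} \<union> (S - {i, i + 1}) \<times> {c + 1}) else 0)"
proof -
  have "finite (B \<union> X \<times> {c})" "\<forall>p\<in>B \<union> X \<times> {c}. snd p < c + 1"
    "(i, c + 1 - 1) \<in> B \<union> X \<times> {c} \<longleftrightarrow> i \<in> X"
    "B \<union> X \<times> {c} - {(i, c + 1 - 1)} = B \<union> (X - {i}) \<times> {c}"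
    using assms(1-3) by auto
  then show ?thesis
    using strip_msum_expand_min[of "B \<union> X \<times> {c}" "c + 1" S m i \<sigma>] assms(4-6) by simp
qed

lemma strip_msum_peel:
  assumes "finite B" "\<forall>p\<in>B. snd p < c" "finite X" "S \<subseteq> {1..int m}"
  shows "strip_msum m \<sigma> (B \<union> X \<times> {c} \<union> S \<times> {c + 1}) =
    (\<Sum>Z\<in>Pow (S \<inter> X). strip_msum m \<sigma> (B \<union> (X - Z) \<times> {c}) * column_msum m (\<sigma> (c + 1)) (S - Z))"
proof -
  have "finite S"
    using assms(4) by (rule finite_subset) simp
  then show ?thesis
    using assms(3,4)
  proof (induction S arbitrary: X rule: finite_psubset_induct)
    case (psubset S X)
    let ?f = "\<lambda>Z. strip_msum m \<sigma> (B \<union> (X - Z) \<times> {c}) * column_msum m (\<sigma> (c + 1)) (S - Z)"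
    show ?case
    proof (cases "S = {}")
      case False
      define i where "i = Min S"
      have i: "i \<in> S" "\<forall>x\<in>S. i \<le> x"
        using psubset(1) False i_def by auto
      define A where "A = S \<inter> X - {i}"
      have split: "(\<Sum>Z\<in>Pow (S \<inter> X). ?f Z) =
          (\<Sum>Z\<in>Pow A. ?f Z) + (if i \<in> X then \<Sum>Z\<in>Pow A. ?f (insert i Z) else 0)"
        using sum_Pow_split[of "S \<inter> X" ?f i] psubset(3) i(1) unfolding A_def by simp
      have "(S - {i}) \<inter> (X - {i}) = A" "S - {i} \<subset> S" "finite (X - {i})" "S - {i} \<subseteq> {1..int m}"
        "\<And>Z. X - {i} - Z = X - insert i Z" "\<And>Z. S - {i} - Z = S - insert i Z"
        using i(1) psubset(3,4) unfolding A_def by auto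
      then have first: "strip_msum m \<sigma> (B \<union> (X - {i}) \<times> {c} \<union> (S - {i}) \<times> {c + 1}) =
          (\<Sum>Z\<in>Pow A. ?f (insert i Z))"
        using psubset.IH[of "S - {i}" "X - {i}"] by simp
      have "A \<subseteq> S - {i}"
        unfolding A_def by auto
      then have "(\<Sum>Z\<in>Pow A. ?f Z) = (if i + 1 \<in> S then \<sigma> (c + 1) * (\<Sum>Z\<in>Pow (A - {i + 1}).
          strip_msum m \<sigma> (B \<union> (X - Z) \<times> {c}) * column_msum m (\<sigma> (c + 1)) (S - {i, i + 1} - Z)) else 0)"
        by (rule sum_Pow_column_msum_min[OF psubset(4) i])
      moreover have "S - {i, i + 1} \<subset> S" "S - {i, i + 1} \<subseteq> {1..int m}"
        "A - {i + 1} = (S - {i, i + 1}) \<inter> X"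
        using i(1) psubset(4) unfolding A_def by auto
      ultimately have second: "(\<Sum>Z\<in>Pow A. ?f Z) = (if i + 1 \<in> S
          then \<sigma> (c + 1) * strip_msum m \<sigma> (B \<union> X \<times> {c} \<union> (S - {i, i + 1}) \<times> {c + 1}) else 0)"
        using psubset.IH[of "S - {i, i + 1}" X] psubset(3) by simp
      show ?thesis
        using strip_msum_expand_min_column[OF assms(1,2) psubset(3,4) i] split first second by simp
    qed simp
  qed
qed

section \<open>Transfer operators\<close>

lemma fold_eq_funpow: "\<forall>x\<in>set xs. f x = g \<Longrightarrow> fold f xs = g ^^ length xs"
  by (induction xs) (simp_all add: fun_eq_iff funpow_swap1)

definition row_supported :: "nat \<Rightarrow> (int set \<Rightarrow> 'a::zero) \<Rightarrow> bool" where
  "row_supported m f \<longleftrightarrow> (\<forall>X. \<not> X \<subseteq> {1..int m} \<longrightarrow> f X = 0)"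

definition init_state :: "nat \<Rightarrow> int set \<Rightarrow> 'a::zero_neq_one" where
  "init_state m X = (if X = {1..int m} then 1 else 0)"

definition flip :: "nat \<Rightarrow> (int set \<Rightarrow> 'a::zero) \<Rightarrow> int set \<Rightarrow> 'a" where
  "flip m f X = (if X \<subseteq> {1..int m} then f ({1..int m} - X) else 0)"

text \<open>A state f assigns to a set X of rows the signed matching sum of a region made of complete
  columns followed by a column occupied exactly in the rows X. When a new column occupied in the
  rows X, with vertical edges of weight s, is appended, the rows Z \<subseteq> X matched horizontally
  take their cells away from the previous, complete column, which leaves the state value
  f ({1..m} - Z) = flip m f Z, and the rows X - Z are matched vertically inside the new column.
  The initial state describes the empty region as a complete column 0 whose cells are all
  matched already.\<close>

definition transfer :: "nat \<Rightarrow> int \<Rightarrow> (int set \<Rightarrow> 'a::comm_ring_1) \<Rightarrow> int set \<Rightarrow> 'a" where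
  "transfer m s f X = (if X \<subseteq> {1..int m}
     then subset_conv (flip m f) (\<lambda>W. of_int (column_msum m s W)) X else 0)"

lemma row_supported_init_state: "row_supported m (init_state m)"
  unfolding row_supported_def init_state_def by auto

lemma row_supported_flip: "row_supported m (flip m f)"
  unfolding row_supported_def flip_def by simp

lemma row_supported_transfer: "row_supported m (transfer m s f)"
  unfolding row_supported_def transfer_def by simp

lemma flip_flip: "row_supported m f \<Longrightarrow> flip m (flip m f) = f"
  unfolding row_supported_def flip_def by (auto simp: double_diff)

lemma flip_init_state: "Z \<subseteq> {1..int m} \<Longrightarrow> flip m (init_state m) Z = (if Z = {} then 1 else 0)"
  unfolding flip_def init_state_def by auto

lemma transfer_eq:
  assumes "X \<subseteq> {1..int m}"
  shows "transfer m s f X = (\<Sum>Z\<in>Pow X. f ({1..int m} - Z) * of_int (column_msum m s (X - Z)))"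
proof -
  have "flip m f Z = f ({1..int m} - Z)" if "Z \<in> Pow X" for Z
    using that assms unfolding flip_def by auto
  then show ?thesis
    unfolding transfer_def subset_conv_def if_P[OF assms] by (intro sum.cong) auto
qed

lemma transfer_zero_weight: "transfer m 0 f = flip m f"
proof
  fix X
  show "transfer m 0 f X = flip m f X"
  proof (cases "X \<subseteq> {1..int m}")
    case True
    then have "finite X"
      by (rule finite_subset) simp
    have "subset_conv (flip m f) (\<lambda>W. of_int (column_msum m 0 W)) X
        = subset_conv (flip m f) (\<lambda>W. if W = {} then 1 else 0) X"
      using True by (intro subset_conv_cong) (auto simp: column_msum_zero_weight)
    then show ?thesis
      unfolding transfer_def using True \<open>finite X\<close> by (simp add: subset_conv_unit_right)
  qed (simp add: transfer_def flip_def)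
qed

lemma flip_sum:
  fixes c :: "'k \<Rightarrow> 'a::comm_semiring_0"
  shows "flip m (\<lambda>X. \<Sum>k\<in>K. c k * f k X) = (\<lambda>X. \<Sum>k\<in>K. c k * flip m (f k) X)"
  unfolding flip_def by (rule ext) simp

lemma transfer_sum:
  "transfer m s (\<lambda>X. \<Sum>k\<in>K. c k * f k X) = (\<lambda>X. \<Sum>k\<in>K. c k * transfer m s (f k) X)"
proof
  fix X
  show "transfer m s (\<lambda>X. \<Sum>k\<in>K. c k * f k X) X = (\<Sum>k\<in>K. c k * transfer m s (f k) X)"
  proof (cases "X \<subseteq> {1..int m}")
    case True
    then show ?thesis
      by (simp add: transfer_eq sum_distrib_left sum_distrib_right mult.assoc sum.swap[of _ K])
  qed (simp add: transfer_def)
qed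

lemma column_msum_conv_inverse:
  assumes "W \<subseteq> {1..int m}"
  shows "subset_conv (\<lambda>Z. of_int (column_msum m 1 Z)) (\<lambda>Z. of_int (column_msum m (-1) Z)) W =
    (if W = {} then 1 else 0)"
proof -
  have "subset_conv (\<lambda>Z. of_int (column_msum m 1 Z)) (\<lambda>Z. of_int (column_msum m (-1) Z)) W =
      of_int (column_msum m 0 W)"
    using column_msum_conv[OF assms, of 1 "-1"] by (simp flip: of_int_subset_conv)
  then show ?thesis
    using column_msum_zero_weight[OF assms] by (cases "W = {}") auto
qed

definition transfer_inv :: "nat \<Rightarrow> (int set \<Rightarrow> 'a::comm_ring_1) \<Rightarrow> int set \<Rightarrow> 'a" where
  "transfer_inv m f = flip m (transfer m (-1) (flip m f))"

lemma transfer_inv_sum: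
  "transfer_inv m (\<lambda>X. \<Sum>k\<in>K. c k * f k X) = (\<lambda>X. \<Sum>k\<in>K. c k * transfer_inv m (f k) X)"
  unfolding transfer_inv_def by (simp add: flip_sum transfer_sum)

lemma transfer_inv_transfer:
  assumes "row_supported m f"
  shows "transfer_inv m (transfer m 1 f) = f"
proof
  fix X
  show "transfer_inv m (transfer m 1 f) X = f X"
  proof (cases "X \<subseteq> {1..int m}")
    case True
    define A where "A = {1..int m} - X"
    have A: "A \<subseteq> {1..int m}" "finite A" "{1..int m} - A = X"
      using True unfolding A_def by auto
    let ?v = "\<lambda>s Z. of_int (column_msum m s Z)"
    have "transfer_inv m (transfer m 1 f) X = transfer m (-1) (flip m (transfer m 1 f)) A"
      unfolding transfer_inv_def flip_def A_def using True by simp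
    also have "\<dots> = subset_conv (transfer m 1 f) (?v (-1)) A"
      using A(1) by (simp add: transfer_def[of m "-1"] flip_flip[OF row_supported_transfer])
    also have "\<dots> = subset_conv (subset_conv (flip m f) (?v 1)) (?v (-1)) A"
      using A(1) by (intro subset_conv_cong) (auto simp: transfer_def)
    also have "\<dots> = subset_conv (flip m f) (\<lambda>Z. if Z = {} then 1 else 0) A"
      unfolding subset_conv_assoc[OF A(2)]
      using A(1) by (intro subset_conv_cong) (auto simp: column_msum_conv_inverse)
    also have "\<dots> = f X"
      using A by (simp add: subset_conv_unit_right flip_def)
    finally show ?thesis .
  next
    case False
    then show ?thesis
      using assms unfolding transfer_inv_def flip_def row_supported_def by simp
  qed
qed

lemma row_supported_funpow_transfer:
  "row_supported m f \<Longrightarrow> row_supported m ((transfer m s ^^ k) f)"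
  by (cases k) (simp_all add: row_supported_transfer)

lemma flip_funpow_transfer_flip:
  assumes "row_supported m f"
  shows "flip m ((transfer m (-1) ^^ k) (flip m f)) = (transfer_inv m ^^ k) f"
proof (induction k)
  case 0
  then show ?case
    using flip_flip[OF assms] by simp
next
  case (Suc k)
  have "row_supported m ((transfer m (-1) ^^ k) (flip m f))"
    by (rule row_supported_funpow_transfer[OF row_supported_flip])
  then have "flip m ((transfer m (-1) ^^ Suc k) (flip m f)) =
      transfer_inv m (flip m ((transfer m (-1) ^^ k) (flip m f)))"
    unfolding transfer_inv_def by (simp add: flip_flip)
  then show ?case
    using Suc.IH by simp
qed

lemma strip_msum_transfer:
  assumes "X \<subseteq> {1..int m}"
  shows "(of_int (strip_msum m \<sigma> ({1..int m} \<times> {1..int N} \<union> X \<times> {int N + 1})) :: 'a::comm_ring_1) =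
    fold (\<lambda>j. transfer m (\<sigma> j)) [1..int N + 1] (init_state m) X"
  using assms
proof (induction N arbitrary: X)
  case 0
  have "finite X"
    using "0" by (rule finite_subset) simp
  have "transfer m (\<sigma> 1) (init_state m) X =
      subset_conv (\<lambda>Z. if Z = {} then 1 else 0) (\<lambda>W. of_int (column_msum m (\<sigma> 1) W) :: 'a) X"
    unfolding transfer_def if_P[OF "0"]
    by (intro subset_conv_cong) (use "0" in \<open>auto simp: flip_init_state\<close>)
  then show ?case
    using "0" \<open>finite X\<close> by (simp add: strip_msum_column subset_conv_unit_left)
next
  case (Suc N)
  let ?F = "fold (\<lambda>j. transfer m (\<sigma> j)) [1..int N + 1] (init_state m) :: int set \<Rightarrow> 'a"
  have "{1..int m} \<times> {1..int (Suc N)} \<union> X \<times> {int (Suc N) + 1} =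
      {1..int m} \<times> {1..int N} \<union> {1..int m} \<times> {int N + 1} \<union> X \<times> {int N + 1 + 1}"
    by auto
  then have "strip_msum m \<sigma> ({1..int m} \<times> {1..int (Suc N)} \<union> X \<times> {int (Suc N) + 1}) =
      (\<Sum>Z\<in>Pow X. strip_msum m \<sigma> ({1..int m} \<times> {1..int N} \<union> ({1..int m} - Z) \<times> {int N + 1})
        * column_msum m (\<sigma> (int N + 1 + 1)) (X - Z))"
    using strip_msum_peel[of "{1..int m} \<times> {1..int N}" "int N + 1" "{1..int m}" X m \<sigma>] Suc.prems
    by (simp add: Int_absorb2)
  then have "of_int (strip_msum m \<sigma> ({1..int m} \<times> {1..int (Suc N)} \<union> X \<times> {int (Suc N) + 1})) =
      (\<Sum>Z\<in>Pow X. ?F ({1..int m} - Z) * of_int (column_msum m (\<sigma> (int N + 1 + 1)) (X - Z)))"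
    by (simp only: of_int_sum of_int_mult Suc.IH[OF Diff_subset])
  also have "\<dots> = transfer m (\<sigma> (int N + 1 + 1)) ?F X"
    by (rule transfer_eq[symmetric]) (rule Suc.prems)
  also have "\<dots> = fold (\<lambda>j. transfer m (\<sigma> j)) [1..int (Suc N) + 1] (init_state m) X"
    using upto_rec2[of 1 "int N + 1 + 1"] by (simp add: add.commute)
  finally show ?case .
qed

lemma strip_msum_rectangle:
  "of_int (strip_msum m \<sigma> ({1..int m} \<times> {1..int N})) =
    fold (\<lambda>j. transfer m (\<sigma> j)) [1..int N] (init_state m) {1..int m}"
proof (cases N)
  case 0
  then show ?thesis
    by (simp add: init_state_def)
next
  case (Suc N')
  then have "{1..int m} \<times> {1..int N} = {1..int m} \<times> {1..int N'} \<union> {1..int m} \<times> {int N' + 1}"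
    by auto
  then show ?thesis
    using strip_msum_transfer[of "{1..int m}" m \<sigma> N'] Suc by (simp add: add.commute)
qed

section \<open>The graphs G(m,n)\<close>

text \<open>column_sign n j is the weight of the vertical edges of G(m,n) in column j; for n \<le> 0 the
  weight 0 in the columns 1 and 2 - n stands for the absence of vertical edges there.\<close>

definition column_sign :: "int \<Rightarrow> int \<Rightarrow> int" where
  "column_sign n j = (if n \<ge> 1 then 1 else if 2 \<le> j \<and> j \<le> 1 - n then -1 else 0)"

lemma gverts_eq: "gverts m n = {1..int m} \<times> {1..gcols n}"
  unfolding gverts_def by auto

lemma gedges_subset_strip_edges:
  "gedges m n \<subseteq> {e \<in> strip_edges m. e \<subseteq> {1..int m} \<times> {1..gcols n}}"
proof
  fix e assume "e \<in> gedges m n"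
  then consider (h) i j where "e = {(i, j), (i, j + 1)}" "1 \<le> i" "i \<le> int m" "1 \<le> j" "j + 1 \<le> gcols n"
    | (v) i j where "e = {(i, j), (i + 1, j)}" "1 \<le> i" "i + 1 \<le> int m" "1 \<le> j" "j \<le> gcols n"
    unfolding gedges_def ghedges_def gvedges_def gcols_def by (auto split: if_splits)
  then show "e \<in> {e \<in> strip_edges m. e \<subseteq> {1..int m} \<times> {1..gcols n}}"
    by cases (auto intro: strip_edges_horizontal strip_edges_vertical)
qed

lemma edge_weight_gedges:
  assumes "e \<in> gedges m n"
  shows "edge_weight (column_sign n) e = gsign m n e"
  using assms unfolding gedges_def
proof
  assume "e \<in> ghedges m n"
  then obtain i j where e: "e = {(i, j), (i, j + 1)}"
    unfolding ghedges_def by blast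
  then have "e \<notin> gvedges m n"
    unfolding gvedges_def by (auto simp: doubleton_eq_iff)
  then show ?thesis
    using e by (simp add: gsign_def)
next
  assume "e \<in> gvedges m n"
  then show ?thesis
    unfolding gvedges_def by (auto simp: gsign_def column_sign_def gvedges_def split: if_splits)
qed

lemma edge_weight_not_gedges:
  assumes "e \<in> strip_edges m" "e \<subseteq> {1..int m} \<times> {1..gcols n}" "e \<notin> gedges m n"
  shows "edge_weight (column_sign n) e = 0"
  using assms(1)
proof (cases rule: strip_edges_cases)
  case (1 i j)
  then have "e \<in> ghedges m n"
    using assms(2) unfolding ghedges_def by auto
  then show ?thesis
    using assms(3) unfolding gedges_def by simp
next
  case (2 i j)
  then have "1 \<le> i" "i + 1 \<le> int m" "1 \<le> j" "j \<le> gcols n"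
    using assms(2) by auto
  moreover have "e \<notin> gvedges m n"
    using assms(3) unfolding gedges_def by simp
  ultimately show ?thesis
    using 2 unfolding gvedges_def gcols_def column_sign_def by (auto split: if_splits)
qed

lemma MG_eq_strip_msum: "MG m n = strip_msum m (column_sign n) ({1..int m} \<times> {1..gcols n})"
proof -
  have "finite {e \<in> strip_edges m. e \<subseteq> {1..int m} \<times> {1..gcols n}}"
    by (rule finite_subset[of _ "Pow ({1..int m} \<times> {1..gcols n})"]) auto
  then have "strip_msum m (column_sign n) ({1..int m} \<times> {1..gcols n}) = MG m n"
    unfolding strip_msum_def MG_def gverts_eq
    using gedges_subset_strip_edges edge_weight_gedges edge_weight_not_gedges
    by (intro Msigned_add_zero_edges) auto
  then show ?thesis ..
qed

lemma MG_eq_transfer_pow: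
  assumes "n \<ge> 1"
  shows "(of_int (MG m n) :: 'a::comm_ring_1) = (transfer m 1 ^^ nat n) (init_state m) {1..int m}"
proof -
  have n: "int (nat n) = n" "gcols n = n" "\<forall>j. column_sign n j = 1"
    using assms by (simp_all add: gcols_def column_sign_def)
  then show ?thesis
    using strip_msum_rectangle[where 'a = 'a, of m "column_sign n" "nat n"]
      fold_eq_funpow[of "[1..n]" "\<lambda>j. transfer m (column_sign n j) :: (int set \<Rightarrow> 'a) \<Rightarrow> _"
        "transfer m 1"]
    by (simp add: MG_eq_strip_msum)
qed

lemma MG_eq_transfer_inv_pow:
  assumes "n \<le> 0"
  shows "(of_int (MG m n) :: 'a::comm_ring_1) = (transfer_inv m ^^ nat (- n)) (init_state m) {1..int m}"
proof -
  define k where "k = nat (- n)"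
  have cols: "gcols n = int (k + 2)" "[1..int (k + 2)] = 1 # [2..int k + 1] @ [int k + 2]"
    using assms upto_rec1[of 1 "int k + 2"] upto_rec2[of 2 "int k + 2"]
    unfolding k_def gcols_def by simp_all
  have "column_sign n 1 = 0" "column_sign n (int k + 2) = 0"
    "\<forall>j\<in>set [2..int k + 1]. column_sign n j = -1"
    using assms unfolding column_sign_def k_def by auto
  then have "fold (\<lambda>j. transfer m (column_sign n j)) [1..gcols n] =
      (transfer m 0 \<circ> transfer m (-1) ^^ k \<circ> transfer m 0 :: (int set \<Rightarrow> 'a) \<Rightarrow> _)"
    using fold_eq_funpow[of "[2..int k + 1]" "\<lambda>j. transfer m (column_sign n j) :: (int set \<Rightarrow> 'a) \<Rightarrow> _"
        "transfer m (-1)"]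
    unfolding cols by simp
  then have "(of_int (MG m n) :: 'a) =
      flip m ((transfer m (-1) ^^ k) (flip m (init_state m))) {1..int m}"
    using strip_msum_rectangle[where 'a = 'a, of m "column_sign n" "k + 2"] cols(1)
    by (simp add: MG_eq_strip_msum transfer_zero_weight)
  then show ?thesis
    unfolding k_def by (simp add: flip_funpow_transfer_flip row_supported_init_state)
qed

definition transfer_seq :: "nat \<Rightarrow> int \<Rightarrow> int set \<Rightarrow> 'a::comm_ring_1" where
  "transfer_seq m n = (if n \<ge> 0 then (transfer m 1 ^^ nat n) (init_state m)
     else (transfer_inv m ^^ nat (- n)) (init_state m))"

lemma transfer_seq_MG: "transfer_seq m n {1..int m} = of_int (MG m n)"
  by (cases "n \<ge> 1"; cases "n = 0") (simp_all add: transfer_seq_def MG_eq_transfer_pow MG_eq_transfer_inv_pow)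

lemma row_supported_transfer_seq: "row_supported m (transfer_seq m n :: int set \<Rightarrow> 'a::comm_ring_1)"
proof -
  have "row_supported m ((transfer_inv m ^^ k) (init_state m) :: int set \<Rightarrow> 'a)" for k
    by (cases k) (simp_all add: transfer_inv_def row_supported_flip row_supported_init_state)
  then show ?thesis
    unfolding transfer_seq_def by (simp add: row_supported_funpow_transfer row_supported_init_state)
qed

lemma transfer_seq_step:
  "transfer_seq m n = (transfer_inv m (transfer_seq m (n + 1)) :: int set \<Rightarrow> 'a::comm_ring_1)"
proof (cases "n \<ge> 0")
  case True
  then have "transfer_seq m (n + 1) = (transfer m 1 (transfer_seq m n) :: int set \<Rightarrow> 'a)"
    by (simp add: transfer_seq_def nat_add_distrib)
  then show ?thesis
    by (simp add: transfer_inv_transfer row_supported_transfer_seq)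
next
  case False
  then have "nat (- n) = Suc (nat (- (n + 1)))"
    by simp
  then show ?thesis
    using False by (simp add: transfer_seq_def)
qed

lemma MG_backward_recurrence:
  "\<exists>d (\<beta> :: nat \<Rightarrow> 'a::field). \<beta> 0 \<noteq> 0 \<and> (\<forall>n \<le> N. (\<Sum>k\<le>d. \<beta> k * of_int (MG m (n + int k))) = 0)"
proof -
  let ?u = "transfer_seq m :: int \<Rightarrow> int set \<Rightarrow> 'a"
  have "\<exists>d \<beta>. \<beta> 0 \<noteq> 0 \<and> (\<forall>n \<le> N. \<forall>S. (\<Sum>k\<le>d. \<beta> k * ?u (n + int k) S) = 0)"
  proof (rule backward_orbit_recurrence)
    show "?u n S = 0" if "S \<notin> Pow {1..int m}" for n S
      using row_supported_transfer_seq that unfolding row_supported_def by blast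
  next
    show "?u n = transfer_inv m (?u (n + 1))" for n
      by (rule transfer_seq_step)
  qed (simp_all add: transfer_inv_sum)
  then obtain d \<beta> where "\<beta> 0 \<noteq> 0" "\<forall>n \<le> N. \<forall>S. (\<Sum>k\<le>d. \<beta> k * ?u (n + int k) S) = 0"
    by blast
  then show ?thesis
    by (intro exI[of _ d] exI[of _ \<beta>]) (simp flip: transfer_seq_MG)
qed

theorem mainTheorem6:
  fixes m d :: nat and b :: "nat \<Rightarrow> complex"
  assumes "m \<ge> 1"
    and "b 0 \<noteq> 0"
    and "\<forall>n::int. n \<ge> 1 \<longrightarrow> (\<Sum>k\<le>d. b k * of_int (MG m (n + int k))) = 0"
  shows "(\<forall>n::int. (\<Sum>k\<le>d. b k * of_int (MG m (n + int k))) = 0)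
    \<and> (\<forall>a :: int \<Rightarrow> complex.
          (\<forall>n. n \<ge> 1 \<longrightarrow> a n = of_int (MG m n))
          \<and> (\<forall>n. (\<Sum>k\<le>d. b k * a (n + int k)) = 0)
          \<longrightarrow> (\<forall>n. a n = of_int (MG m n)))"
proof -
  define x where "x n = (\<Sum>k\<le>d. b k * of_int (MG m (n + int k)))" for n
  obtain d' and \<beta> :: "nat \<Rightarrow> complex" where "\<beta> 0 \<noteq> 0"
    and \<beta>: "\<And>n. n \<le> int d \<Longrightarrow> (\<Sum>j\<le>d'. \<beta> j * of_int (MG m (n + int j))) = 0"
    using MG_backward_recurrence[of "int d" m] by blast
  have rec: "(\<Sum>j\<le>d'. \<beta> j * x (n + int j)) = 0" if "n < 1" for n
  proof -
    have "(\<Sum>j\<le>d'. \<beta> j * x (n + int j)) =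
        (\<Sum>k\<le>d. b k * (\<Sum>j\<le>d'. \<beta> j * of_int (MG m (n + int k + int j))))"
      unfolding x_def by (simp add: sum_distrib_left algebra_simps sum.swap[of _ "{..d}"])
    then show ?thesis
      using that \<beta> by simp
  qed
  have x_zero: "x n = 0" for n
    by (rule recurrence_vanishes_backward[where b = \<beta> and N = 1, OF \<open>\<beta> 0 \<noteq> 0\<close> rec])
      (use assms(3) in \<open>auto simp: x_def\<close>)
  have "a n = of_int (MG m n)"
    if "\<forall>n\<ge>1. a n = of_int (MG m n)" "\<forall>n. (\<Sum>k\<le>d. b k * a (n + int k)) = 0" for a n
    by (rule recurrence_determines_backward[where b = b and N = 1, OF assms(2)])
      (use that x_zero in \<open>auto simp: x_def\<close>)
  then show ?thesis
    using x_zero unfolding x_def by blast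
qed

end
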